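(* The commutator of $B$ and $B^\dagger$ satisfies $$[B,B^\dagger]=2^{-1}\sum_{w\in W^\star}|0,w\rangle\langle 0,w|,$$ where $|0,w\rangle\langle0,w|$ denotes the operator $\phi\mapsto\langle\phi,|0,w\rangle\rangle\,|0,w\rangle$ and the sum converges strongly; equivalently, $[B,B^\dagger]$ is one half of the orthogonal projection onto the kernel of $L$.
   Context: $\Omega=\{0,1\}^{\mathbb N}$ with the shift $\sigma$; for $a\in\{0,1\}$, $ax=(a,x_1,\dots)$. $\mu$ is the measure of maximal entropy (uniform Bernoulli product measure), $L^2(\mu)$ the Hilbert space of square-integrable functions with inner product $\langle\cdot,\cdot\rangle$. Ruelle operator $L\phi(x)=\frac12(\phi(0x)+\phi(1x))$; Koopman operator $K\phi=\phi\circ\sigma$; $B=2^{-1/2}L$, $B^\dagger=2^{-1/2}K$, $[X,Y]=XY-YX$. $W$ is the set of finite words over $\{0,1\}$ (including the empty word $\varepsilon$), $\ell(v)$ the length, $uv$ concatenation, $[v]$ the cylinder of sequences starting with $v$, $\chi_{[v]}$ its indicator. For nonempty $v$, $e_v=2^{\ell(v)/2}(\chi_{[v1]}-\chi_{[v0]})$; $e^0_\varepsilon=-2^{1/2}\chi_{[0]}$, $e^1_\varepsilon=2^{1/2}\chi_{[1]}$. For $w\in W$, $|0,w\rangle=2^{-1/2}(e_{0w}-e_{1w})$; with $W^\star=\{\star\}\cup W$, $|0,\star\rangle=2^{-1/2}(e^0_\varepsilon+e^1_\varepsilon)$. *)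

theory Defs
  imports "HOL-Probability.Probability"
begin

text \<open>Sequences in {0,1}^N are functions nat => bool, with 0 encoded as False and 1 as True.
  Finite words are bool lists.\<close>

type_synonym seq = "nat \<Rightarrow> bool"

definition mu :: "seq measure" where
  "mu = (\<Pi>\<^sub>M i\<in>(UNIV::nat set). measure_pmf (pmf_of_set (UNIV::bool set)))"

definition prepend :: "bool \<Rightarrow> seq \<Rightarrow> seq" where
  "prepend a x = (\<lambda>n. if n = 0 then a else x (n - 1))"

definition shift :: "seq \<Rightarrow> seq" where
  "shift x = (\<lambda>n. x (Suc n))"

definition ruelle :: "(seq \<Rightarrow> complex) \<Rightarrow> seq \<Rightarrow> complex" where
  "ruelle \<phi> x = (\<phi> (prepend False x) + \<phi> (prepend True x)) / 2"

definition koopman :: "(seq \<Rightarrow> complex) \<Rightarrow> seq \<Rightarrow> complex" where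
  "koopman \<phi> = \<phi> \<circ> shift"

definition opB :: "(seq \<Rightarrow> complex) \<Rightarrow> seq \<Rightarrow> complex" where
  "opB \<phi> x = complex_of_real (1 / sqrt 2) * ruelle \<phi> x"

definition opBdag :: "(seq \<Rightarrow> complex) \<Rightarrow> seq \<Rightarrow> complex" where
  "opBdag \<phi> x = complex_of_real (1 / sqrt 2) * koopman \<phi> x"

definition commBBdag :: "(seq \<Rightarrow> complex) \<Rightarrow> seq \<Rightarrow> complex" where
  "commBBdag \<phi> x = opB (opBdag \<phi>) x - opBdag (opB \<phi>) x"

definition L2 :: "(seq \<Rightarrow> complex) set" where
  "L2 = {f. f \<in> borel_measurable mu \<and> integrable mu (\<lambda>x. (cmod (f x))\<^sup>2)}"

definition inner_L2 :: "(seq \<Rightarrow> complex) \<Rightarrow> (seq \<Rightarrow> complex) \<Rightarrow> complex" where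
  "inner_L2 f g = (\<integral>x. f x * cnj (g x) \<partial>mu)"

definition dist_L2_sq :: "(seq \<Rightarrow> complex) \<Rightarrow> (seq \<Rightarrow> complex) \<Rightarrow> real" where
  "dist_L2_sq f g = (\<integral>x. (cmod (f x - g x))\<^sup>2 \<partial>mu)"

definition cyl :: "bool list \<Rightarrow> seq set" where
  "cyl v = {x. \<forall>i<length v. x i = v ! i}"

definition chi :: "bool list \<Rightarrow> seq \<Rightarrow> complex" where
  "chi v = indicator (cyl v)"

definition evec :: "bool list \<Rightarrow> seq \<Rightarrow> complex" where
  "evec v x = complex_of_real (2 powr (real (length v) / 2)) * (chi (v @ [True]) x - chi (v @ [False]) x)"

definition e0eps :: "seq \<Rightarrow> complex" where
  "e0eps x = - complex_of_real (sqrt 2) * chi [False] x"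

definition e1eps :: "seq \<Rightarrow> complex" where
  "e1eps x = complex_of_real (sqrt 2) * chi [True] x"

text \<open>W-star = {star} union W is modelled as bool list option, None being star.\<close>
fun ket0 :: "bool list option \<Rightarrow> seq \<Rightarrow> complex" where
  "ket0 None x = complex_of_real (2 powr (-1/2)) * (e0eps x + e1eps x)"
| "ket0 (Some w) x = complex_of_real (2 powr (-1/2)) * (evec (False # w) x - evec (True # w) x)"

end

theory Submission
  imports Defs
begin

text \<open>Since \<open>L K = id\<close>, \<open>2 [B, B\<^sup>\<dagger>] \<phi> = \<phi> - (L \<phi>) \<circ> \<sigma>\<close>, and on the cylinder \<open>[b]\<close>
  this is \<open>\<plusminus>g \<circ> \<sigma>\<close> with \<open>g x = (\<phi> (0x) - \<phi> (1x)) / 2\<close> and a sign depending on \<open>b\<close> only.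
  The kets have the same structure: \<open>|0,s\<rangle> (b x) = \<plusminus>h\<^sub>s x\<close> for the Haar system
  \<open>h = (-1, e\<^sub>w)\<close>, and \<open>\<langle>\<phi>, |0,s\<rangle>\<rangle> = \<langle>g, h\<^sub>s\<rangle>\<close>. So the squared error of the partial sums
  is a quarter of that of the Haar expansion of \<open>g\<close>, and the first claim is the completeness of
  the Haar system in \<open>L\<^sup>2(\<mu>)\<close>: the expansion truncated at level \<open>n\<close> reproduces every function
  of the first \<open>n\<close> symbols, and these functions are dense (a Dynkin argument for indicators,
  then simple functions). For the second claim, \<open>L ((L \<phi>) \<circ> \<sigma>) = L \<phi>\<close>, and \<open>(L \<phi>) \<circ> \<sigma>\<close> is
  orthogonal to \<open>ker L\<close> because the Koopman operator is the adjoint of \<open>L\<close>.\<close>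

section \<open>The coin-tossing measure\<close>

abbreviation coin :: "bool measure" where
  "coin \<equiv> measure_pmf (pmf_of_set UNIV)"

interpretation coins: sequence_space coin
  by unfold_locales

interpretation coin_pair: pair_sigma_finite coin coins.S ..

lemma mu_eq_coins: "mu = coins.S"
  by (simp add: mu_def)

interpretation mu: prob_space mu
  unfolding mu_eq_coins by (rule coins.prob_space_axioms)

lemma space_mu [simp]: "space mu = UNIV"
  by (simp add: mu_eq_coins space_PiM)

lemma sets_mu_cong [measurable_cong]: "sets mu = sets coins.S"
  by (simp add: mu_eq_coins)

lemma prepend_eq_case_nat: "prepend a x = case_nat a x"
  by (auto simp: prepend_def fun_eq_iff split: nat.split)

lemma prepend_0 [simp]: "prepend a x 0 = a"
  by (simp add: prepend_def)

lemma prepend_Suc [simp]: "prepend a x (Suc n) = x n"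
  by (simp add: prepend_def)

lemma shift_prepend [simp]: "shift (prepend a x) = x"
  by (simp add: shift_def prepend_def)

lemma prepend_shift: "prepend (x 0) (shift x) = x"
  by (auto simp: prepend_def shift_def fun_eq_iff)

lemma measurable_prepend [measurable]: "prepend a \<in> measurable mu mu"
  unfolding mu_eq_coins prepend_eq_case_nat by measurable

lemma measurable_shift [measurable]: "shift \<in> measurable mu mu"
  unfolding mu_eq_coins shift_def
  by (rule measurable_PiM_single'[where f = "\<lambda>i x. x (Suc i)"]) (auto simp: space_PiM)

text \<open>Since \<open>mu\<close> is the image of \<open>coin \<Otimes> mu\<close> under \<open>(a, x) \<mapsto> a x\<close>, the integral
  of \<open>f\<close> is the average of the integrals of \<open>f (0 \<cdot>)\<close> and \<open>f (1 \<cdot>)\<close>.\<close>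

lemma nn_integral_mu_prepend:
  assumes [measurable]: "f \<in> borel_measurable mu"
  shows "(\<integral>\<^sup>+x. f x \<partial>mu) = ((\<integral>\<^sup>+x. f (prepend False x) \<partial>mu) + (\<integral>\<^sup>+x. f (prepend True x) \<partial>mu)) / 2"
proof -
  have [measurable]: "f \<in> borel_measurable coins.S"
    using assms by (simp add: mu_eq_coins)
  have "(\<integral>\<^sup>+x. f x \<partial>mu) = (\<integral>\<^sup>+x. f x \<partial>distr (coin \<Otimes>\<^sub>M coins.S) coins.S (\<lambda>(a, x). case_nat a x))"
    by (simp add: coins.PiM_iter mu_eq_coins)
  also have "\<dots> = (\<integral>\<^sup>+p. f (case_nat (fst p) (snd p)) \<partial>(coin \<Otimes>\<^sub>M coins.S))"
    by (subst nn_integral_distr) (auto simp: split_beta')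
  also have "\<dots> = (\<integral>\<^sup>+a. \<integral>\<^sup>+x. f (case_nat a x) \<partial>coins.S \<partial>coin)"
    by (subst coins.nn_integral_fst[symmetric]) auto
  also have "\<dots> = ((\<integral>\<^sup>+x. f (prepend False x) \<partial>mu) + (\<integral>\<^sup>+x. f (prepend True x) \<partial>mu)) / 2"
    by (simp add: nn_integral_pmf_of_set UNIV_bool prepend_eq_case_nat mu_eq_coins add.commute)
  finally show ?thesis .
qed

lemma integral_mu_prepend:
  fixes f :: "seq \<Rightarrow> 'b::{banach, second_countable_topology}"
  assumes "integrable mu f"
  shows "integral\<^sup>L mu f = (integral\<^sup>L mu (\<lambda>x. f (prepend False x)) + integral\<^sup>L mu (\<lambda>x. f (prepend True x))) /\<^sub>R 2"
proof -
  have f: "integrable coins.S f"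
    using assms by (simp add: mu_eq_coins)
  then have [measurable]: "f \<in> borel_measurable coins.S"
    by auto
  have "integrable (distr (coin \<Otimes>\<^sub>M coins.S) coins.S (\<lambda>(a, x). case_nat a x)) f"
    using f by (simp add: coins.PiM_iter)
  then have f_pair: "integrable (coin \<Otimes>\<^sub>M coins.S) (\<lambda>p. f (case_nat (fst p) (snd p)))"
    by (subst (asm) integrable_distr_eq) (auto simp: split_beta')
  have "integral\<^sup>L mu f = integral\<^sup>L (distr (coin \<Otimes>\<^sub>M coins.S) coins.S (\<lambda>(a, x). case_nat a x)) f"
    by (simp add: coins.PiM_iter mu_eq_coins)
  also have "\<dots> = integral\<^sup>L (coin \<Otimes>\<^sub>M coins.S) (\<lambda>p. f (case_nat (fst p) (snd p)))"
    by (subst integral_distr) (auto simp: split_beta')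
  also have "\<dots> = (\<integral>a. \<integral>x. f (case_nat a x) \<partial>coins.S \<partial>coin)"
    using f_pair by (subst coin_pair.integral_fst'[symmetric]) auto
  also have "\<dots> = (integral\<^sup>L mu (\<lambda>x. f (prepend False x)) + integral\<^sup>L mu (\<lambda>x. f (prepend True x))) /\<^sub>R 2"
    by (subst integral_measure_pmf[of UNIV])
      (auto simp: UNIV_bool prepend_eq_case_nat mu_eq_coins scaleR_add_right add.commute)
  finally show ?thesis .
qed

lemma integrable_mu_prepend_iff:
  fixes f :: "seq \<Rightarrow> 'b::{banach, second_countable_topology}"
  assumes [measurable]: "f \<in> borel_measurable mu"
  shows "integrable mu f \<longleftrightarrow>
    integrable mu (\<lambda>x. f (prepend False x)) \<and> integrable mu (\<lambda>x. f (prepend True x))"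
  by (simp add: integrable_iff_bounded nn_integral_mu_prepend[of "\<lambda>x. ennreal (norm (f x))"]
      ennreal_divide_eq_top_iff less_top[symmetric] ennreal_add_eq_top)

section \<open>The space \<open>L\<^sup>2(\<mu>)\<close>\<close>

lemma norm_add_power2_le:
  fixes a b :: "'a::real_normed_vector"
  shows "(norm (a + b))\<^sup>2 \<le> 2 * (norm a)\<^sup>2 + 2 * (norm b)\<^sup>2"
proof -
  have "(norm (a + b))\<^sup>2 \<le> (norm a + norm b)\<^sup>2"
    by (simp add: norm_triangle_ineq power_mono)
  also have "\<dots> \<le> 2 * (norm a)\<^sup>2 + 2 * (norm b)\<^sup>2"
    using sum_squares_bound[of "norm a" "norm b"] by (simp add: power2_sum)
  finally show ?thesis .
qed

lemma borel_measurable_cnj [measurable (raw)]: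
  "f \<in> borel_measurable M \<Longrightarrow> (\<lambda>x. cnj (f x)) \<in> borel_measurable M"
  by (rule borel_measurable_continuous_on[OF continuous_on_cnj[OF continuous_on_id]])

lemma L2_add [intro]:
  assumes "f \<in> L2" "g \<in> L2"
  shows "(\<lambda>x. f x + g x) \<in> L2"
proof -
  have [measurable]: "f \<in> borel_measurable mu" "g \<in> borel_measurable mu"
    using assms by (auto simp: L2_def)
  have "integrable mu (\<lambda>x. 2 * (cmod (f x))\<^sup>2 + 2 * (cmod (g x))\<^sup>2)"
    using assms by (auto simp: L2_def)
  then have "integrable mu (\<lambda>x. (cmod (f x + g x))\<^sup>2)"
    by (rule Bochner_Integration.integrable_bound) (auto intro!: AE_I2 norm_add_power2_le)
  then show ?thesis
    by (simp add: L2_def)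
qed

lemma L2_cmult [intro]: "f \<in> L2 \<Longrightarrow> (\<lambda>x. c * f x) \<in> L2"
  by (auto simp: L2_def norm_mult power_mult_distrib)

lemma L2_diff [intro]:
  assumes "f \<in> L2" "g \<in> L2"
  shows "(\<lambda>x. f x - g x) \<in> L2"
  using L2_add[OF assms(1) L2_cmult[OF assms(2), of "-1"]] by simp

lemma L2_bounded:
  assumes [measurable]: "f \<in> borel_measurable mu" and "\<And>x. cmod (f x) \<le> C"
  shows "f \<in> L2"
proof -
  have "integrable mu (\<lambda>x. (cmod (f x))\<^sup>2)"
    by (rule mu.integrable_const_bound[where B = "C\<^sup>2"]) (auto intro!: power_mono assms(2))
  then show ?thesis
    by (simp add: L2_def)
qed

lemma L2_const [intro]: "(\<lambda>_. c) \<in> L2"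
  by (rule L2_bounded) auto

lemma L2_divide [intro]: "f \<in> L2 \<Longrightarrow> (\<lambda>x. f x / c) \<in> L2"
  using L2_cmult[of f "inverse c"] by (simp add: divide_inverse mult.commute)

lemma L2_sum [intro]: "(\<And>i. i \<in> I \<Longrightarrow> f i \<in> L2) \<Longrightarrow> (\<lambda>x. \<Sum>i\<in>I. f i x) \<in> L2"
  by (induction I rule: infinite_finite_induct) (auto simp: L2_const)

lemma L2_prepend [intro]:
  assumes "f \<in> L2"
  shows "(\<lambda>x. f (prepend a x)) \<in> L2"
proof -
  have [measurable]: "f \<in> borel_measurable mu"
    using assms by (simp add: L2_def)
  show ?thesis
    using assms integrable_mu_prepend_iff[of "\<lambda>x. (cmod (f x))\<^sup>2"] by (cases a) (auto simp: L2_def)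
qed

lemma L2_shift [intro]:
  assumes "f \<in> L2"
  shows "(\<lambda>x. f (shift x)) \<in> L2"
proof -
  have [measurable]: "f \<in> borel_measurable mu"
    using assms by (simp add: L2_def)
  show ?thesis
    using assms integrable_mu_prepend_iff[of "\<lambda>x. (cmod (f (shift x)))\<^sup>2"] by (auto simp: L2_def)
qed

lemma integrable_L2_mult_cnj:
  assumes "f \<in> L2" "g \<in> L2"
  shows "integrable mu (\<lambda>x. f x * cnj (g x))"
proof -
  have [measurable]: "f \<in> borel_measurable mu" "g \<in> borel_measurable mu"
    using assms by (auto simp: L2_def)
  have bound: "cmod (f x) * cmod (g x) \<le> (cmod (f x))\<^sup>2 + (cmod (g x))\<^sup>2" for x
    using sum_squares_bound[of "cmod (f x)" "cmod (g x)"]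
      mult_nonneg_nonneg[OF norm_ge_zero norm_ge_zero, of "f x" "g x"] by linarith
  have "integrable mu (\<lambda>x. (cmod (f x))\<^sup>2 + (cmod (g x))\<^sup>2)"
    using assms by (auto simp: L2_def)
  then show ?thesis
    by (rule Bochner_Integration.integrable_bound) (auto intro!: AE_I2 simp: norm_mult bound)
qed

definition sqnorm :: "(seq \<Rightarrow> complex) \<Rightarrow> real" where
  "sqnorm f = (\<integral>x. (cmod (f x))\<^sup>2 \<partial>mu)"

lemma sqnorm_nonneg: "0 \<le> sqnorm f"
  by (simp add: sqnorm_def)

lemma sqnorm_prepend:
  assumes "f \<in> L2"
  shows "sqnorm f = (sqnorm (\<lambda>x. f (prepend False x)) + sqnorm (\<lambda>x. f (prepend True x))) / 2"
  using assms by (simp add: sqnorm_def L2_def integral_mu_prepend)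

lemma sqnorm_add_le:
  assumes "f \<in> L2" "g \<in> L2"
  shows "sqnorm (\<lambda>x. f x + g x) \<le> 2 * sqnorm f + 2 * sqnorm g"
proof -
  have "sqnorm (\<lambda>x. f x + g x) \<le> (\<integral>x. 2 * (cmod (f x))\<^sup>2 + 2 * (cmod (g x))\<^sup>2 \<partial>mu)"
    unfolding sqnorm_def
    by (rule integral_mono) (use L2_add[OF assms] assms in \<open>auto simp: L2_def norm_add_power2_le\<close>)
  also have "\<dots> = 2 * sqnorm f + 2 * sqnorm g"
    using assms by (simp add: sqnorm_def L2_def)
  finally show ?thesis .
qed

lemma sqnorm_cmult: "sqnorm (\<lambda>x. c * f x) = (cmod c)\<^sup>2 * sqnorm f"
  by (simp add: sqnorm_def norm_mult power_mult_distrib)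

lemma sqnorm_diff_commute: "sqnorm (\<lambda>x. f x - g x) = sqnorm (\<lambda>x. g x - f x)"
  by (simp add: sqnorm_def norm_minus_commute)

lemma inner_L2_self: "inner_L2 f f = complex_of_real (sqnorm f)"
  unfolding inner_L2_def sqnorm_def integral_complex_of_real[symmetric]
  by (intro Bochner_Integration.integral_cong refl) (use complex_norm_square in simp)

lemma inner_L2_cmult_left: "inner_L2 (\<lambda>x. c * f x) g = c * inner_L2 f g"
  by (simp add: inner_L2_def mult.assoc)

lemma inner_L2_cmult_right: "inner_L2 f (\<lambda>x. c * g x) = cnj c * inner_L2 f g"
  by (simp add: inner_L2_def mult_ac)

lemma inner_L2_const [simp]: "inner_L2 (\<lambda>_. c) (\<lambda>_. d) = c * cnj d"
  using mu.prob_space by (simp add: inner_L2_def)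

lemma inner_L2_divide_left: "inner_L2 (\<lambda>x. f x / c) g = inner_L2 f g / c"
  by (simp add: inner_L2_def)

lemma inner_L2_commute: "inner_L2 g f = cnj (inner_L2 f g)"
  using Bochner_Integration.integral_cnj[of mu "\<lambda>x. f x * cnj (g x)"]
  by (simp add: inner_L2_def mult.commute)

lemma inner_L2_sum_left:
  assumes "\<And>i. i \<in> I \<Longrightarrow> f i \<in> L2" "g \<in> L2"
  shows "inner_L2 (\<lambda>x. \<Sum>i\<in>I. f i x) g = (\<Sum>i\<in>I. inner_L2 (f i) g)"
  unfolding inner_L2_def sum_distrib_right
  by (rule Bochner_Integration.integral_sum) (use assms integrable_L2_mult_cnj in auto)

lemma inner_L2_sum_right:
  assumes "\<And>i. i \<in> I \<Longrightarrow> f i \<in> L2" "g \<in> L2"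
  shows "inner_L2 g (\<lambda>x. \<Sum>i\<in>I. f i x) = (\<Sum>i\<in>I. inner_L2 g (f i))"
  by (subst inner_L2_commute) (simp add: inner_L2_sum_left[OF assms] inner_L2_commute[of g])

lemma inner_L2_diff_left:
  assumes "f \<in> L2" "h \<in> L2" "g \<in> L2"
  shows "inner_L2 (\<lambda>x. f x - h x) g = inner_L2 f g - inner_L2 h g"
  unfolding inner_L2_def left_diff_distrib
  by (rule Bochner_Integration.integral_diff) (use assms integrable_L2_mult_cnj in auto)

lemma inner_L2_diff_right:
  assumes "f \<in> L2" "h \<in> L2" "g \<in> L2"
  shows "inner_L2 g (\<lambda>x. f x - h x) = inner_L2 g f - inner_L2 g h"
  by (subst inner_L2_commute) (simp add: inner_L2_diff_left[OF assms] inner_L2_commute[of g])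

lemma inner_L2_add_right:
  assumes "f \<in> L2" "h \<in> L2" "g \<in> L2"
  shows "inner_L2 g (\<lambda>x. f x + h x) = inner_L2 g f + inner_L2 g h"
  unfolding inner_L2_def complex_cnj_add distrib_left
  by (rule Bochner_Integration.integral_add) (use assms integrable_L2_mult_cnj in auto)

lemma inner_L2_prepend:
  assumes "f \<in> L2" "g \<in> L2"
  shows "inner_L2 f g = (inner_L2 (\<lambda>x. f (prepend False x)) (\<lambda>x. g (prepend False x))
      + inner_L2 (\<lambda>x. f (prepend True x)) (\<lambda>x. g (prepend True x))) / 2"
  unfolding inner_L2_def
  by (subst integral_mu_prepend[OF integrable_L2_mult_cnj[OF assms]]) (simp add: scaleR_conv_of_real)

lemma inner_L2_AE_zero_right: "AE x in mu. g x = 0 \<Longrightarrow> inner_L2 f g = 0"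
  unfolding inner_L2_def by (rule integral_eq_zero_AE) auto

section \<open>The Haar system\<close>

lemma sets_cyl [measurable]: "cyl v \<in> sets mu"
proof -
  have "Measurable.pred mu (\<lambda>x. \<forall>i<length v. x i = v ! i)"
    unfolding mu_eq_coins by measurable
  then show ?thesis
    by (simp add: pred_def cyl_def)
qed

lemma chi_Nil [simp]: "chi [] x = 1"
  by (simp add: chi_def cyl_def)

lemma L2_chi [simp, intro]: "chi v \<in> L2"
  unfolding chi_def by (rule L2_bounded[where C = 1]) (auto simp: indicator_def)

lemma chi_Cons_prepend: "chi (a # v) (prepend b x) = (if a = b then chi v x else 0)"
proof -
  have "prepend b x \<in> cyl (a # v) \<longleftrightarrow> a = b \<and> x \<in> cyl v"
    by (auto simp: cyl_def less_Suc_eq_0_disj prepend_def)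
  then show ?thesis
    by (simp add: chi_def indicator_def)
qed

lemma evec_L2 [simp, intro]: "evec w \<in> L2"
  unfolding evec_def[abs_def] by (intro L2_cmult L2_diff L2_chi)

lemma evec_Nil_prepend: "evec [] (prepend b x) = (if b then 1 else -1)"
  by (simp add: evec_def chi_Cons_prepend)

lemma evec_Cons_prepend: "evec (a # w) (prepend b x) = (if a = b then sqrt 2 else 0) * evec w x"
proof -
  have "(2::real) powr (real (Suc (length w)) / 2) = 2 powr (1/2) * 2 powr (real (length w) / 2)"
    by (simp add: powr_add[symmetric] add_divide_distrib)
  then show ?thesis
    by (simp add: evec_def chi_Cons_prepend powr_half_sqrt)
qed

lemma of_real_sqrt2_mult_self [simp]: "complex_of_real (sqrt 2) * complex_of_real (sqrt 2) = 2"
  by (simp flip: of_real_mult)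

lemma inner_evec_const: "inner_L2 (evec w) (\<lambda>_. c) = 0"
proof -
  have "inner_L2 (evec w) (\<lambda>_. 1) = 0"
  proof (induction w)
    case Nil
    show ?case
      by (subst inner_L2_prepend) (auto simp: evec_Nil_prepend)
  next
    case (Cons a w)
    then show ?case
      by (subst inner_L2_prepend) (auto simp: evec_Cons_prepend inner_L2_cmult_left)
  qed
  then show ?thesis
    using inner_L2_cmult_right[of "evec w" c "\<lambda>_. 1"] by simp
qed

lemma inner_const_evec: "inner_L2 (\<lambda>_. c) (evec w) = 0"
  using inner_evec_const[of w c] inner_L2_commute[of "\<lambda>_. c" "evec w"] by simp

lemma inner_evec: "inner_L2 (evec v) (evec w) = (if v = w then 1 else 0)"
proof (induction v arbitrary: w)
  case Nil
  show ?case
    by (cases w; subst inner_L2_prepend)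
      (auto simp: evec_Nil_prepend evec_Cons_prepend inner_L2_cmult_right inner_const_evec)
next
  case (Cons a v)
  show ?case
    by (cases w; subst inner_L2_prepend)
      (auto simp: evec_Nil_prepend evec_Cons_prepend inner_L2_cmult_left inner_L2_cmult_right
        inner_evec_const Cons.IH)
qed

text \<open>The constant is \<open>-1\<close> rather than \<open>1\<close> so that \<open>ket0 s (b x) = \<plusminus>haar s x\<close> holds with a
  sign depending on \<open>b\<close> only, see \<open>ket0_prepend\<close>.\<close>

definition haar :: "bool list option \<Rightarrow> seq \<Rightarrow> complex" where
  "haar s = (case s of None \<Rightarrow> (\<lambda>_. -1) | Some w \<Rightarrow> evec w)"

lemma haar_L2 [simp, intro]: "haar s \<in> L2"
  by (cases s) (auto simp: haar_def)

lemma inner_haar: "inner_L2 (haar s) (haar t) = (if s = t then 1 else 0)"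
  by (cases s; cases t) (auto simp: haar_def inner_evec inner_const_evec inner_evec_const)

definition haar_coeff :: "(seq \<Rightarrow> complex) \<Rightarrow> bool list option \<Rightarrow> complex" where
  "haar_coeff g s = inner_L2 g (haar s)"

definition haar_partial :: "bool list option set \<Rightarrow> (seq \<Rightarrow> complex) \<Rightarrow> seq \<Rightarrow> complex" where
  "haar_partial F g x = (\<Sum>s\<in>F. haar_coeff g s * haar s x)"

lemma haar_partial_L2 [simp, intro]: "haar_partial F g \<in> L2"
  unfolding haar_partial_def[abs_def] by (intro L2_sum L2_cmult haar_L2)

lemma inner_haar_partial_right:
  assumes "f \<in> L2"
  shows "inner_L2 f (haar_partial F g) = (\<Sum>s\<in>F. cnj (haar_coeff g s) * haar_coeff f s)"
  unfolding haar_partial_def[abs_def]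
  by (subst inner_L2_sum_right) (auto simp: assms inner_L2_cmult_right haar_coeff_def)

lemma inner_haar_partial_left:
  assumes "f \<in> L2"
  shows "inner_L2 (haar_partial F g) f = (\<Sum>s\<in>F. haar_coeff g s * cnj (haar_coeff f s))"
  by (subst inner_L2_commute) (simp add: inner_haar_partial_right[OF assms])

lemma haar_coeff_haar_partial:
  assumes "finite F"
  shows "haar_coeff (haar_partial F g) t = (if t \<in> F then haar_coeff g t else 0)"
  unfolding haar_coeff_def haar_partial_def[abs_def]
  by (subst inner_L2_sum_left) (auto simp: assms inner_L2_cmult_left inner_haar if_distrib cong: if_cong)

lemma sum_mult_cnj_eq_of_real:
  "(\<Sum>s\<in>F. c s * cnj (c s)) = complex_of_real (\<Sum>s\<in>F. (cmod (c s))\<^sup>2)"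
  using complex_norm_square by simp

lemma sqnorm_haar_partial:
  assumes "finite F"
  shows "sqnorm (haar_partial F g) = (\<Sum>s\<in>F. (cmod (haar_coeff g s))\<^sup>2)"
proof -
  have "complex_of_real (sqnorm (haar_partial F g))
      = (\<Sum>s\<in>F. haar_coeff g s * cnj (haar_coeff (haar_partial F g) s))"
    by (simp add: inner_L2_self[symmetric] inner_haar_partial_left)
  also have "\<dots> = (\<Sum>s\<in>F. haar_coeff g s * cnj (haar_coeff g s))"
    by (rule sum.cong) (simp_all add: haar_coeff_haar_partial assms)
  finally show ?thesis
    by (simp only: sum_mult_cnj_eq_of_real of_real_eq_iff)
qed

lemma sqnorm_haar_residual:
  assumes "g \<in> L2" "finite F"
  shows "sqnorm (\<lambda>x. g x - haar_partial F g x) = sqnorm g - (\<Sum>s\<in>F. (cmod (haar_coeff g s))\<^sup>2)"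
proof -
  let ?S = "haar_partial F g"
  have "complex_of_real (sqnorm (\<lambda>x. g x - ?S x))
      = inner_L2 g g - inner_L2 g ?S - (inner_L2 ?S g - inner_L2 ?S ?S)"
    using assms by (simp add: inner_L2_self[symmetric] inner_L2_diff_left inner_L2_diff_right L2_diff)
  also have "\<dots> = complex_of_real (sqnorm g - (\<Sum>s\<in>F. (cmod (haar_coeff g s))\<^sup>2))"
    using assms by (simp add: inner_L2_self inner_haar_partial_left inner_haar_partial_right
        sqnorm_haar_partial sum_mult_cnj_eq_of_real mult.commute[of "cnj _"])
  finally show ?thesis
    by (simp only: of_real_eq_iff)
qed

lemma sqnorm_haar_partial_le:
  assumes "g \<in> L2" "finite F"
  shows "sqnorm (haar_partial F g) \<le> sqnorm g"
  using sqnorm_haar_residual[OF assms] sqnorm_haar_partial[OF assms(2), of g]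
    sqnorm_nonneg[of "\<lambda>x. g x - haar_partial F g x"] by linarith

lemma haar_partial_diff:
  assumes "u \<in> L2" "v \<in> L2"
  shows "haar_partial F (\<lambda>x. u x - v x) x = haar_partial F u x - haar_partial F v x"
  using assms by (simp add: haar_partial_def haar_coeff_def inner_L2_diff_left[OF assms haar_L2]
      left_diff_distrib sum_subtractf)

lemma haar_partial_cmult: "haar_partial F (\<lambda>x. c * u x) x = c * haar_partial F u x"
  by (simp add: haar_partial_def haar_coeff_def inner_L2_cmult_left sum_distrib_left mult.assoc)

lemma haar_partial_add:
  assumes "u \<in> L2" "v \<in> L2"
  shows "haar_partial F (\<lambda>x. u x + v x) x = haar_partial F u x + haar_partial F v x"
  using haar_partial_diff[OF assms(1) L2_cmult[OF assms(2)], of F "-1"] haar_partial_cmult[of F "-1" v]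
  by simp

section \<open>Completeness of the Haar system\<close>

definition short_words :: "nat \<Rightarrow> bool list set" where
  "short_words n = {w. length w < n}"

definition haar_upto :: "nat \<Rightarrow> bool list option set" where
  "haar_upto n = insert None (Some ` short_words n)"

abbreviation haar_trunc :: "nat \<Rightarrow> (seq \<Rightarrow> complex) \<Rightarrow> seq \<Rightarrow> complex" where
  "haar_trunc n \<equiv> haar_partial (haar_upto n)"

lemma finite_short_words [simp]: "finite (short_words n)"
proof -
  have "short_words n \<subseteq> {w. set w \<subseteq> UNIV \<and> length w \<le> n}"
    by (auto simp: short_words_def)
  then show ?thesis
    using finite_lists_length_le[of "UNIV :: bool set" n] finite_subset by auto
qed

lemma finite_haar_upto [simp]: "finite (haar_upto n)"
  by (simp add: haar_upto_def)

lemma sum_short_words_Suc: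
  "(\<Sum>w\<in>short_words (Suc n). h w) = h [] + (\<Sum>w\<in>short_words n. h (False # w) + h (True # w))"
proof -
  have words: "short_words (Suc n) = insert [] ((\<lambda>p. fst p # snd p) ` (UNIV \<times> short_words n))"
  proof (rule set_eqI)
    fix w
    show "w \<in> short_words (Suc n) \<longleftrightarrow> w \<in> insert [] ((\<lambda>p. fst p # snd p) ` (UNIV \<times> short_words n))"
      by (cases w) (force simp: short_words_def image_iff)+
  qed
  have inj: "inj_on (\<lambda>p. fst p # snd p) (UNIV \<times> short_words n)"
    by (auto simp: inj_on_def)
  have "(\<Sum>w\<in>short_words (Suc n). h w) = h [] + (\<Sum>p\<in>UNIV \<times> short_words n. h (fst p # snd p))"
    unfolding words by (subst sum.insert) (auto simp: sum.reindex[OF inj])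
  also have "\<dots> = h [] + (\<Sum>a\<in>UNIV. \<Sum>w\<in>short_words n. h (a # w))"
    by (simp add: sum.cartesian_product split_beta)
  also have "\<dots> = h [] + (\<Sum>w\<in>short_words n. h (False # w) + h (True # w))"
    by (simp add: UNIV_bool sum.distrib)
  finally show ?thesis .
qed

lemma haar_trunc_eq:
  "haar_trunc n g x = inner_L2 g (\<lambda>_. 1) + (\<Sum>w\<in>short_words n. inner_L2 g (evec w) * evec w x)"
proof -
  have "haar_coeff g None * haar None x = inner_L2 g (\<lambda>_. 1)"
    using inner_L2_cmult_right[of g "-1" "\<lambda>_. 1"] by (simp add: haar_coeff_def haar_def)
  then show ?thesis
    by (simp add: haar_partial_def haar_upto_def sum.reindex haar_coeff_def haar_def)
qed

lemma inner_evec_Cons: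
  assumes "g \<in> L2"
  shows "inner_L2 g (evec (a # w)) = sqrt 2 / 2 * inner_L2 (\<lambda>z. g (prepend a z)) (evec w)"
  using assms by (subst inner_L2_prepend) (auto simp: evec_Cons_prepend inner_L2_cmult_right)

lemma inner_evec_Nil:
  assumes "g \<in> L2"
  shows "inner_L2 g (evec []) =
    (inner_L2 (\<lambda>z. g (prepend True z)) (\<lambda>_. 1) - inner_L2 (\<lambda>z. g (prepend False z)) (\<lambda>_. 1)) / 2"
  using assms inner_L2_cmult_right[of "\<lambda>z. g (prepend False z)" "-1" "\<lambda>_. 1"]
  by (subst inner_L2_prepend) (auto simp: evec_Nil_prepend)

lemma inner_const_prepend:
  assumes "g \<in> L2"
  shows "inner_L2 g (\<lambda>_. 1) =
    (inner_L2 (\<lambda>z. g (prepend False z)) (\<lambda>_. 1) + inner_L2 (\<lambda>z. g (prepend True z)) (\<lambda>_. 1)) / 2"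
  using assms by (subst inner_L2_prepend) auto

lemma haar_trunc_Suc_prepend:
  assumes "g \<in> L2"
  shows "haar_trunc (Suc n) g (prepend b y) = haar_trunc n (\<lambda>z. g (prepend b z)) y"
proof -
  have level_Cons: "inner_L2 g (evec (False # w)) * evec (False # w) (prepend b y)
      + inner_L2 g (evec (True # w)) * evec (True # w) (prepend b y)
      = inner_L2 (\<lambda>z. g (prepend b z)) (evec w) * evec w y" for w
    using assms by (cases b) (simp_all add: inner_evec_Cons evec_Cons_prepend)
  have level_Nil: "inner_L2 g (\<lambda>_. 1) + inner_L2 g (evec []) * evec [] (prepend b y)
      = inner_L2 (\<lambda>z. g (prepend b z)) (\<lambda>_. 1)"
    using assms by (cases b) (simp_all add: inner_evec_Nil inner_const_prepend evec_Nil_prepend field_simps)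
  show ?thesis
    unfolding haar_trunc_eq sum_short_words_Suc level_Cons add.assoc[symmetric] level_Nil ..
qed

definition determined_by_prefix :: "nat \<Rightarrow> (seq \<Rightarrow> 'a) \<Rightarrow> bool" where
  "determined_by_prefix n f \<longleftrightarrow> (\<forall>x y. (\<forall>i<n. x i = y i) \<longrightarrow> f x = f y)"

lemma determined_by_prefix_mono:
  "determined_by_prefix n f \<Longrightarrow> n \<le> m \<Longrightarrow> determined_by_prefix m f"
  unfolding determined_by_prefix_def by auto

lemma determined_by_prefix_prepend:
  assumes "determined_by_prefix (Suc n) f"
  shows "determined_by_prefix n (\<lambda>z. f (prepend a z))"
  unfolding determined_by_prefix_def
proof (intro allI impI)
  fix y z :: seq
  assume "\<forall>i<n. y i = z i"
  then have "\<forall>i<Suc n. prepend a y i = prepend a z i"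
    by (auto simp: less_Suc_eq_0_disj)
  then show "f (prepend a y) = f (prepend a z)"
    using assms unfolding determined_by_prefix_def by blast
qed

lemma haar_trunc_determined:
  assumes "f \<in> L2" "determined_by_prefix n f"
  shows "haar_trunc n f x = f x"
  using assms
proof (induction n arbitrary: f x)
  case 0
  then have "f = (\<lambda>_. f x)"
    by (auto simp: determined_by_prefix_def fun_eq_iff)
  then obtain c where "f = (\<lambda>_. c)"
    by blast
  then show ?case
    by (simp add: haar_trunc_eq short_words_def)
next
  case (Suc n)
  have "determined_by_prefix n (\<lambda>z. f (prepend (x 0) z))"
    using Suc.prems(2) by (rule determined_by_prefix_prepend)
  then have "haar_trunc n (\<lambda>z. f (prepend (x 0) z)) (shift x) = f (prepend (x 0) (shift x))"
    using Suc.IH Suc.prems(1) by blast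
  then show ?case
    using haar_trunc_Suc_prepend[OF Suc.prems(1), of n "x 0" "shift x"] by (simp add: prepend_shift)
qed

definition haar_convergent :: "(seq \<Rightarrow> complex) \<Rightarrow> bool" where
  "haar_convergent u \<longleftrightarrow> u \<in> L2 \<and> (\<lambda>n. sqnorm (\<lambda>x. u x - haar_trunc n u x)) \<longlonglongrightarrow> 0"

lemma haar_convergent_determined:
  assumes "u \<in> L2" "determined_by_prefix n u"
  shows "haar_convergent u"
proof -
  have "sqnorm (\<lambda>x. u x - haar_trunc m u x) = sqnorm (\<lambda>_. 0)" if "n \<le> m" for m
    using haar_trunc_determined[OF assms(1) determined_by_prefix_mono[OF assms(2) that]]
    by (intro arg_cong[where f = sqnorm]) (simp add: fun_eq_iff)
  then have "sqnorm (\<lambda>x. u x - haar_trunc m u x) = 0" if "n \<le> m" for m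
    using that by (simp add: sqnorm_def)
  then have "eventually (\<lambda>m. sqnorm (\<lambda>x. u x - haar_trunc m u x) = 0) sequentially"
    by (auto simp: eventually_sequentially)
  then show ?thesis
    using assms(1) by (simp add: haar_convergent_def tendsto_eventually)
qed

lemma haar_convergent_add:
  assumes "haar_convergent u" "haar_convergent v"
  shows "haar_convergent (\<lambda>x. u x + v x)"
proof -
  have L2: "u \<in> L2" "v \<in> L2"
    using assms by (auto simp: haar_convergent_def)
  have bound: "sqnorm (\<lambda>x. u x + v x - haar_trunc n (\<lambda>x. u x + v x) x)
      \<le> 2 * sqnorm (\<lambda>x. u x - haar_trunc n u x) + 2 * sqnorm (\<lambda>x. v x - haar_trunc n v x)" for n
  proof -
    have "sqnorm (\<lambda>x. u x + v x - haar_trunc n (\<lambda>x. u x + v x) x)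
        = sqnorm (\<lambda>x. (u x - haar_trunc n u x) + (v x - haar_trunc n v x))"
      by (intro arg_cong[where f = sqnorm]) (simp add: fun_eq_iff haar_partial_add[OF L2])
    also have "\<dots> \<le> 2 * sqnorm (\<lambda>x. u x - haar_trunc n u x) + 2 * sqnorm (\<lambda>x. v x - haar_trunc n v x)"
      by (rule sqnorm_add_le) (simp_all add: L2_diff L2)
    finally show ?thesis .
  qed
  have lim: "(\<lambda>n. 2 * sqnorm (\<lambda>x. u x - haar_trunc n u x) + 2 * sqnorm (\<lambda>x. v x - haar_trunc n v x))
      \<longlonglongrightarrow> 0"
    using assms unfolding haar_convergent_def by (intro tendsto_add_zero tendsto_mult_right_zero) auto
  have "(\<lambda>n. sqnorm (\<lambda>x. u x + v x - haar_trunc n (\<lambda>x. u x + v x) x)) \<longlonglongrightarrow> 0"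
    by (rule tendsto_sandwich[OF _ _ tendsto_const lim]) (simp_all add: sqnorm_nonneg bound)
  then show ?thesis
    using L2 by (simp add: haar_convergent_def L2_add)
qed

lemma haar_convergent_cmult:
  assumes "haar_convergent u"
  shows "haar_convergent (\<lambda>x. c * u x)"
proof -
  have "sqnorm (\<lambda>x. c * u x - haar_trunc n (\<lambda>x. c * u x) x)
      = (cmod c)\<^sup>2 * sqnorm (\<lambda>x. u x - haar_trunc n u x)" for n
    using sqnorm_cmult[of c "\<lambda>x. u x - haar_trunc n u x"] by (simp add: haar_partial_cmult right_diff_distrib)
  moreover have "(\<lambda>n. (cmod c)\<^sup>2 * sqnorm (\<lambda>x. u x - haar_trunc n u x)) \<longlonglongrightarrow> 0"
    using assms unfolding haar_convergent_def by (intro tendsto_mult_right_zero) auto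
  ultimately show ?thesis
    using assms by (simp add: haar_convergent_def L2_cmult)
qed

lemma haar_convergent_sum:
  "(\<And>i. i \<in> I \<Longrightarrow> haar_convergent (f i)) \<Longrightarrow> haar_convergent (\<lambda>x. \<Sum>i\<in>I. f i x)"
proof (induction I rule: infinite_finite_induct)
  case (insert i I)
  then show ?case
    by (simp add: haar_convergent_add)
qed (auto intro!: haar_convergent_determined[where n = 0] simp: determined_by_prefix_def)

text \<open>The first term does not depend on \<open>n\<close> because the truncations are contractions.\<close>

lemma sqnorm_haar_trunc_residual_le:
  assumes u: "u \<in> L2" and v: "v \<in> L2"
  shows "sqnorm (\<lambda>x. u x - haar_trunc n u x)
    \<le> 6 * sqnorm (\<lambda>x. u x - v x) + 4 * sqnorm (\<lambda>x. v x - haar_trunc n v x)"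
proof -
  let ?d = "\<lambda>x. v x - u x"
  have "sqnorm (\<lambda>x. u x - haar_trunc n u x)
      = sqnorm (\<lambda>x. (u x - v x) + ((v x - haar_trunc n v x) + haar_trunc n ?d x))"
    by (simp add: haar_partial_diff[OF v u])
  also have "\<dots> \<le> 2 * sqnorm (\<lambda>x. u x - v x)
      + 2 * sqnorm (\<lambda>x. (v x - haar_trunc n v x) + haar_trunc n ?d x)"
    by (rule sqnorm_add_le) (simp_all add: L2_add L2_diff u v)
  also have "\<dots> \<le> 2 * sqnorm (\<lambda>x. u x - v x)
      + 2 * (2 * sqnorm (\<lambda>x. v x - haar_trunc n v x) + 2 * sqnorm (haar_trunc n ?d))"
    using sqnorm_add_le[of "\<lambda>x. v x - haar_trunc n v x" "haar_trunc n ?d"] v by (simp add: L2_diff)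
  also have "\<dots> \<le> 2 * sqnorm (\<lambda>x. u x - v x)
      + 2 * (2 * sqnorm (\<lambda>x. v x - haar_trunc n v x) + 2 * sqnorm (\<lambda>x. u x - v x))"
    using sqnorm_haar_partial_le[of ?d] u v sqnorm_diff_commute[of v u] by (simp add: L2_diff)
  finally show ?thesis
    by (simp add: algebra_simps)
qed

lemma haar_convergent_limit:
  assumes u: "u \<in> L2"
    and approx: "\<And>e. e > 0 \<Longrightarrow> \<exists>v. haar_convergent v \<and> sqnorm (\<lambda>x. u x - v x) < e"
  shows "haar_convergent u"
  unfolding haar_convergent_def
proof (intro conjI u LIMSEQ_I)
  fix r :: real
  assume "0 < r"
  then obtain v where v: "haar_convergent v" "sqnorm (\<lambda>x. u x - v x) < r / 12"
    using approx[of "r / 12"] by auto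
  then have "v \<in> L2" and lim: "(\<lambda>n. sqnorm (\<lambda>x. v x - haar_trunc n v x)) \<longlonglongrightarrow> 0"
    by (auto simp: haar_convergent_def)
  obtain N where "\<forall>n\<ge>N. norm (sqnorm (\<lambda>x. v x - haar_trunc n v x) - 0) < r / 8"
    using LIMSEQ_D[OF lim, of "r / 8"] \<open>0 < r\<close> by auto
  then have N: "sqnorm (\<lambda>x. v x - haar_trunc n v x) < r / 8" if "n \<ge> N" for n
    using that by (simp add: abs_of_nonneg[OF sqnorm_nonneg])
  have "sqnorm (\<lambda>x. u x - haar_trunc n u x) < r" if "n \<ge> N" for n
    using sqnorm_haar_trunc_residual_le[OF u \<open>v \<in> L2\<close>, of n] N[OF that] v(2) by linarith
  then show "\<exists>N. \<forall>n\<ge>N. norm (sqnorm (\<lambda>x. u x - haar_trunc n u x) - 0) < r"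
    by (auto simp: sqnorm_nonneg)
qed

lemma sets_mu_eq_sigma_sets: "sets mu = sigma_sets UNIV (prod_algebra UNIV (\<lambda>_. coin))"
  by (simp add: mu_def sets_PiM)

lemma L2_indicator [intro]: "A \<in> sets mu \<Longrightarrow> (indicator A :: seq \<Rightarrow> complex) \<in> L2"
  by (rule L2_bounded[where C = 1]) (auto simp: indicator_def)

lemma haar_convergent_indicator_prod_algebra:
  assumes "A \<in> prod_algebra UNIV (\<lambda>_. coin)"
  shows "haar_convergent (indicator A :: seq \<Rightarrow> complex)"
proof -
  from assms obtain J E where A: "A = prod_emb UNIV (\<lambda>_. coin) J (\<Pi>\<^sub>E j\<in>J. E j)" "finite J"
    by (auto elim!: prod_algebraE)
  have mem: "x \<in> A \<longleftrightarrow> (\<forall>j\<in>J. x j \<in> E j)" for x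
    using A(1) by (auto simp: prod_emb_iff)
  have "x \<in> A \<longleftrightarrow> y \<in> A" if "\<forall>i<Suc (Max J). x i = y i" for x y
  proof -
    have "\<forall>j\<in>J. x j = y j"
      using that A(2) by (auto simp: le_imp_less_Suc)
    then show ?thesis
      by (simp add: mem)
  qed
  then have "determined_by_prefix (Suc (Max J)) (indicator A :: seq \<Rightarrow> complex)"
    by (auto simp: determined_by_prefix_def indicator_def)
  moreover have "A \<in> sets mu"
    using assms by (simp add: sets_mu_eq_sigma_sets)
  ultimately show ?thesis
    by (blast intro: haar_convergent_determined)
qed

lemma haar_convergent_indicator_UN:
  fixes A :: "nat \<Rightarrow> seq set"
  assumes "disjoint_family A" "\<And>i. A i \<in> sets mu" "\<And>i. haar_convergent (indicator (A i) :: seq \<Rightarrow> complex)"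
  shows "haar_convergent (indicator (\<Union>i. A i) :: seq \<Rightarrow> complex)"
proof (rule haar_convergent_limit)
  let ?U = "\<Union>i. A i" and ?A = "\<lambda>N. \<Union>i<N. A i"
  show "indicator ?U \<in> L2"
    using assms(2) by blast
  fix e :: real
  assume "e > 0"
  have "incseq ?A"
    unfolding incseq_def by (intro allI impI UN_mono) auto
  then have "(\<lambda>N. measure mu (?A N)) \<longlonglongrightarrow> measure mu (\<Union>N. ?A N)"
    using assms(2) by (intro mu.finite_Lim_measure_incseq) auto
  moreover have "(\<Union>N. ?A N) = ?U"
    by auto
  ultimately have "(\<lambda>N. measure mu (?A N)) \<longlonglongrightarrow> measure mu ?U"
    by simp
  from LIMSEQ_D[OF this \<open>e > 0\<close>] obtain N where "norm (measure mu (?A N) - measure mu ?U) < e"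
    by blast
  then have N: "measure mu ?U - measure mu (?A N) < e"
    by simp
  have "indicator (?A N) = (\<lambda>x. \<Sum>i<N. indicator (A i) x :: complex)"
    using assms(1) by (auto simp: fun_eq_iff disjoint_family_on_def intro!: indicator_UN_disjoint)
  then have "haar_convergent (indicator (?A N) :: seq \<Rightarrow> complex)"
    using assms(3) by (simp add: haar_convergent_sum)
  moreover have "sqnorm (\<lambda>x. indicator ?U x - indicator (?A N) x :: complex) = measure mu (?U - ?A N)"
  proof -
    have "(\<lambda>x. (cmod (indicator ?U x - indicator (?A N) x :: complex))\<^sup>2) = indicator (?U - ?A N)"
      by (auto simp: fun_eq_iff indicator_def)
    then show ?thesis
      by (simp add: sqnorm_def)
  qed
  moreover have "measure mu (?U - ?A N) = measure mu ?U - measure mu (?A N)"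
    using assms(2) by (intro mu.finite_measure_Diff) auto
  ultimately show "\<exists>v. haar_convergent v \<and> sqnorm (\<lambda>x. indicator ?U x - v x) < e"
    using N by auto
qed

lemma haar_convergent_indicator:
  assumes "A \<in> sets mu"
  shows "haar_convergent (indicator A :: seq \<Rightarrow> complex)"
proof -
  have closed: "prod_algebra UNIV (\<lambda>_. coin) \<subseteq> Pow UNIV"
    by simp
  have "A \<in> sigma_sets UNIV (prod_algebra UNIV (\<lambda>_. coin))"
    using assms by (simp add: sets_mu_eq_sigma_sets)
  from Int_stable_prod_algebra closed this show ?thesis
  proof (induction rule: sigma_sets_induct_disjoint)
    case (basic A)
    then show ?case
      by (rule haar_convergent_indicator_prod_algebra)
  next
    case empty
    show ?case
      by (auto intro!: haar_convergent_determined[where n = 0] simp: determined_by_prefix_def)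
  next
    case (compl A)
    have "haar_convergent (\<lambda>x. 1 + (-1) * (indicator A x :: complex))"
      by (rule haar_convergent_add[OF haar_convergent_determined[where n = 0]
            haar_convergent_cmult[OF compl.IH]])
        (auto simp: determined_by_prefix_def)
    moreover have "(\<lambda>x. 1 + (-1) * (indicator A x :: complex)) = indicator (UNIV - A)"
      by (auto simp: indicator_def fun_eq_iff)
    ultimately show ?case
      by simp
  next
    case (union A)
    then show ?case
      by (intro haar_convergent_indicator_UN) (auto simp: sets_mu_eq_sigma_sets)
  qed
qed

lemma haar_convergent_simple:
  assumes "simple_function mu u"
  shows "haar_convergent (u :: seq \<Rightarrow> complex)"
proof -
  have u_eq: "u = (\<lambda>x. \<Sum>y\<in>range u. y * indicator (u -` {y}) x)"
  proof
    fix x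
    have "u x = (\<Sum>y\<in>u ` space mu. indicator (u -` {y} \<inter> space mu) x *\<^sub>R y)"
      by (rule simple_function_indicator_representation_banach[OF assms]) simp
    also have "\<dots> = (\<Sum>y\<in>range u. y * indicator (u -` {y}) x)"
      by (rule sum.cong) (auto simp: indicator_def)
    finally show "u x = (\<Sum>y\<in>range u. y * indicator (u -` {y}) x)" .
  qed
  have preimage: "u -` {y} \<in> sets mu" if "y \<in> range u" for y
    using assms that by (auto simp: simple_function_def)
  show ?thesis
    using preimage
    by (subst u_eq) (intro haar_convergent_sum haar_convergent_cmult haar_convergent_indicator; blast)
qed

lemma simple_approx_L2:
  assumes "u \<in> L2"
  obtains s where "\<And>i. simple_function mu (s i)" "(\<lambda>i. sqnorm (\<lambda>x. u x - s i x)) \<longlonglongrightarrow> 0"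
proof -
  have [measurable]: "u \<in> borel_measurable mu"
    using assms by (simp add: L2_def)
  obtain s where s: "\<And>i. simple_function mu (s i)" "\<And>x. (\<lambda>i. s i x) \<longlonglongrightarrow> u x"
    "\<And>i x. dist (s i x) 0 \<le> 2 * dist (u x) 0"
    using borel_measurable_implies_sequence_metric[of u mu 0] by auto
  have [measurable]: "s i \<in> borel_measurable mu" for i
    using s(1) by (rule borel_measurable_simple_function)
  have "(\<lambda>i. \<integral>x. (cmod (u x - s i x))\<^sup>2 \<partial>mu) \<longlonglongrightarrow> (\<integral>x. 0 \<partial>mu)"
  proof (rule integral_dominated_convergence[where w = "\<lambda>x. 9 * (cmod (u x))\<^sup>2"])
    show "integrable mu (\<lambda>x. 9 * (cmod (u x))\<^sup>2)"
      using assms by (simp add: L2_def)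
    have "(\<lambda>i. u x - s i x) \<longlonglongrightarrow> 0" for x
      using tendsto_diff[OF tendsto_const[of "u x"] s(2)[of x]] by simp
    then have "(\<lambda>i. cmod (u x - s i x)) \<longlonglongrightarrow> 0" for x
      by (rule tendsto_norm_zero)
    then show "AE x in mu. (\<lambda>i. (cmod (u x - s i x))\<^sup>2) \<longlonglongrightarrow> 0"
      using tendsto_power[of _ 0 _ 2] by fastforce
    show "AE x in mu. norm ((cmod (u x - s i x))\<^sup>2) \<le> 9 * (cmod (u x))\<^sup>2" for i
    proof (rule AE_I2)
      fix x
      have "cmod (u x - s i x) \<le> 3 * cmod (u x)"
        using norm_triangle_ineq4[of "u x" "s i x"] s(3)[of i x] by simp
      then show "norm ((cmod (u x - s i x))\<^sup>2) \<le> 9 * (cmod (u x))\<^sup>2"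
        using power_mono[of "cmod (u x - s i x)" "3 * cmod (u x)" 2] by (simp add: power_mult_distrib)
    qed
  qed measurable
  then show ?thesis
    by (intro that[OF s(1)]) (simp add: sqnorm_def)
qed

lemma haar_convergent_L2:
  assumes "u \<in> L2"
  shows "haar_convergent u"
proof (rule haar_convergent_limit[OF assms])
  fix e :: real
  assume "e > 0"
  obtain s where s: "\<And>i. simple_function mu (s i)" "(\<lambda>i. sqnorm (\<lambda>x. u x - s i x)) \<longlonglongrightarrow> 0"
    using simple_approx_L2[OF assms] by blast
  from LIMSEQ_D[OF s(2) \<open>e > 0\<close>] obtain i where "sqnorm (\<lambda>x. u x - s i x) < e"
    by (auto simp: abs_of_nonneg[OF sqnorm_nonneg])
  then show "\<exists>v. haar_convergent v \<and> sqnorm (\<lambda>x. u x - v x) < e"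
    using haar_convergent_simple[OF s(1)] by blast
qed

text \<open>By Bessel's identity the residual decreases as the index set grows, so convergence along
  the levels \<open>haar_upto n\<close> gives convergence along all finite index sets.\<close>

lemma haar_partial_tendsto:
  assumes "g \<in> L2"
  shows "((\<lambda>F. sqnorm (\<lambda>x. g x - haar_partial F g x)) \<longlongrightarrow> 0) (finite_subsets_at_top UNIV)"
proof (rule tendstoI)
  fix e :: real
  assume "e > 0"
  have "(\<lambda>n. sqnorm (\<lambda>x. g x - haar_trunc n g x)) \<longlonglongrightarrow> 0"
    using haar_convergent_L2[OF assms] by (simp add: haar_convergent_def)
  from LIMSEQ_D[OF this \<open>e > 0\<close>] obtain n where n: "sqnorm (\<lambda>x. g x - haar_trunc n g x) < e"
    by (auto simp: abs_of_nonneg[OF sqnorm_nonneg])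
  have "sqnorm (\<lambda>x. g x - haar_partial F g x) < e" if "finite F" "haar_upto n \<subseteq> F" for F
  proof -
    have "sqnorm (\<lambda>x. g x - haar_partial F g x) = sqnorm g - (\<Sum>s\<in>F. (cmod (haar_coeff g s))\<^sup>2)"
      using sqnorm_haar_residual[OF assms that(1)] .
    also have "\<dots> \<le> sqnorm g - (\<Sum>s\<in>haar_upto n. (cmod (haar_coeff g s))\<^sup>2)"
      using that by (intro diff_left_mono sum_mono2) auto
    also have "\<dots> = sqnorm (\<lambda>x. g x - haar_trunc n g x)"
      using sqnorm_haar_residual[OF assms finite_haar_upto] by simp
    finally show ?thesis
      using n by simp
  qed
  then show "eventually (\<lambda>F. dist (sqnorm (\<lambda>x. g x - haar_partial F g x)) 0 < e) (finite_subsets_at_top UNIV)"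
    unfolding eventually_finite_subsets_at_top
    by (intro exI[of _ "haar_upto n"]) (auto simp: abs_of_nonneg[OF sqnorm_nonneg])
qed

section \<open>The commutator\<close>

lemma two_commBBdag: "2 * commBBdag \<phi> x = \<phi> x - ruelle \<phi> (shift x)"
  by (simp add: commBBdag_def opB_def opBdag_def ruelle_def koopman_def field_simps flip: of_real_mult)

lemma ruelle_L2 [intro]: "\<phi> \<in> L2 \<Longrightarrow> ruelle \<phi> \<in> L2"
  unfolding ruelle_def[abs_def] by (intro L2_divide L2_add L2_prepend)

lemma commBBdag_L2:
  assumes "\<phi> \<in> L2"
  shows "commBBdag \<phi> \<in> L2"
proof -
  have "commBBdag \<phi> = (\<lambda>x. (\<phi> x - ruelle \<phi> (shift x)) / 2)"
    by (rule ext) (simp add: two_commBBdag[symmetric])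
  then show ?thesis
    using assms by (simp add: L2_divide L2_diff L2_shift ruelle_L2)
qed

lemma ruelle_two_commBBdag: "ruelle (\<lambda>y. 2 * commBBdag \<phi> y) x = 0"
  by (simp add: two_commBBdag ruelle_def)

lemma inner_koopman_ruelle:
  assumes "f \<in> L2" "g \<in> L2"
  shows "inner_L2 (\<lambda>x. f (shift x)) g = inner_L2 f (ruelle g)"
proof -
  have "inner_L2 (\<lambda>x. f (shift x)) g
      = (inner_L2 f (\<lambda>x. g (prepend False x)) + inner_L2 f (\<lambda>x. g (prepend True x))) / 2"
    using assms by (subst inner_L2_prepend) auto
  also have "\<dots> = inner_L2 f (ruelle g)"
    unfolding ruelle_def[abs_def] divide_inverse mult.commute[of _ "inverse 2"] inner_L2_cmult_right
      inner_L2_add_right[OF L2_prepend[OF assms(2)] L2_prepend[OF assms(2)] assms(1)]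
    by simp
  finally show ?thesis .
qed

definition bit_sign :: "bool \<Rightarrow> complex" where
  "bit_sign b = (if b then -1 else 1)"

lemma ket0_prepend: "ket0 s (prepend b x) = bit_sign b * haar s x"
proof -
  have "(2::real) powr - (1/2) = 1 / sqrt 2"
    by (simp add: powr_minus_divide powr_half_sqrt[symmetric])
  then have "complex_of_real (2 powr - (1/2)) = 1 / complex_of_real (sqrt 2)"
    by simp
  then show ?thesis
    by (cases s; cases b)
      (auto simp: haar_def bit_sign_def e0eps_def e1eps_def chi_Cons_prepend evec_Cons_prepend field_simps)
qed

lemma ket0_L2 [simp]: "ket0 s \<in> L2"
proof (cases s)
  case None
  then have "ket0 s = (\<lambda>x. complex_of_real (2 powr (-1/2))
      * (- complex_of_real (sqrt 2) * chi [False] x + complex_of_real (sqrt 2) * chi [True] x))"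
    by (simp add: fun_eq_iff e0eps_def e1eps_def)
  then show ?thesis
    by (simp add: L2_cmult L2_diff)
next
  case (Some w)
  then have "ket0 s = (\<lambda>x. complex_of_real (2 powr (-1/2)) * (evec (False # w) x - evec (True # w) x))"
    by (simp add: fun_eq_iff)
  then show ?thesis
    by (simp add: L2_cmult L2_diff)
qed

definition prepend_diff :: "(seq \<Rightarrow> complex) \<Rightarrow> seq \<Rightarrow> complex" where
  "prepend_diff \<phi> x = (\<phi> (prepend False x) - \<phi> (prepend True x)) / 2"

lemma prepend_diff_L2: "\<phi> \<in> L2 \<Longrightarrow> prepend_diff \<phi> \<in> L2"
  unfolding prepend_diff_def[abs_def] by (intro L2_divide L2_diff L2_prepend)

lemma commBBdag_prepend: "commBBdag \<phi> (prepend b y) = bit_sign b / 2 * prepend_diff \<phi> y"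
  using two_commBBdag[of \<phi> "prepend b y"]
  by (cases b) (simp_all add: bit_sign_def prepend_diff_def ruelle_def field_simps)

lemma inner_ket0:
  assumes "\<phi> \<in> L2"
  shows "inner_L2 \<phi> (ket0 s) = haar_coeff (prepend_diff \<phi>) s"
proof -
  have halves: "(\<lambda>x. ket0 s (prepend b x)) = (\<lambda>x. bit_sign b * haar s x)" for b
    by (intro ext ket0_prepend)
  have "inner_L2 \<phi> (ket0 s) = (inner_L2 (\<lambda>x. \<phi> (prepend False x)) (\<lambda>x. ket0 s (prepend False x))
      + inner_L2 (\<lambda>x. \<phi> (prepend True x)) (\<lambda>x. ket0 s (prepend True x))) / 2"
    by (rule inner_L2_prepend[OF assms ket0_L2])
  also have "\<dots>
      = (inner_L2 (\<lambda>x. \<phi> (prepend False x)) (haar s) - inner_L2 (\<lambda>x. \<phi> (prepend True x)) (haar s)) / 2"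
    by (simp only: halves inner_L2_cmult_right) (simp add: bit_sign_def)
  also have "\<dots> = haar_coeff (prepend_diff \<phi>) s"
    unfolding haar_coeff_def prepend_diff_def inner_L2_divide_left
    by (simp only: inner_L2_diff_left[OF L2_prepend[OF assms] L2_prepend[OF assms] haar_L2])
  finally show ?thesis .
qed

lemma dist_commBBdag_ket0_sum:
  assumes "\<phi> \<in> L2"
  shows "dist_L2_sq (commBBdag \<phi>) (\<lambda>x. (1/2) * (\<Sum>w\<in>F. inner_L2 \<phi> (ket0 w) * ket0 w x))
    = sqnorm (\<lambda>x. prepend_diff \<phi> x - haar_partial F (prepend_diff \<phi>) x) / 4"
proof -
  let ?D = "\<lambda>x. commBBdag \<phi> x - (1/2) * (\<Sum>w\<in>F. inner_L2 \<phi> (ket0 w) * ket0 w x)"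
  let ?r = "\<lambda>x. prepend_diff \<phi> x - haar_partial F (prepend_diff \<phi>) x"
  have "(\<lambda>x. ?D (prepend b x)) = (\<lambda>x. bit_sign b / 2 * ?r x)" for b
    using assms by (simp add: fun_eq_iff commBBdag_prepend inner_ket0 ket0_prepend haar_partial_def
        sum_distrib_left right_diff_distrib mult_ac)
  then have "sqnorm (\<lambda>x. ?D (prepend b x)) = (cmod (bit_sign b / 2))\<^sup>2 * sqnorm ?r" for b
    by (simp only: sqnorm_cmult)
  then have half: "sqnorm (\<lambda>x. ?D (prepend b x)) = sqnorm ?r / 4" for b
    by (cases b) (simp_all add: bit_sign_def norm_divide power2_eq_square)
  have "?D \<in> L2"
    using commBBdag_L2[OF assms] by (intro L2_diff L2_cmult L2_sum ket0_L2)
  have "dist_L2_sq (commBBdag \<phi>) (\<lambda>x. (1/2) * (\<Sum>w\<in>F. inner_L2 \<phi> (ket0 w) * ket0 w x)) = sqnorm ?D"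
    by (simp add: dist_L2_sq_def sqnorm_def)
  also have "\<dots> = (sqnorm (\<lambda>x. ?D (prepend False x)) + sqnorm (\<lambda>x. ?D (prepend True x))) / 2"
    by (rule sqnorm_prepend[OF \<open>?D \<in> L2\<close>])
  also have "\<dots> = sqnorm ?r / 4"
    by (simp only: half) simp
  finally show ?thesis .
qed

theorem proposition3p5:
  shows "(\<forall>\<phi>\<in>L2.
            ((\<lambda>F. dist_L2_sq (commBBdag \<phi>)
                  (\<lambda>x. (1/2) * (\<Sum>w\<in>F. inner_L2 \<phi> (ket0 w) * ket0 w x)))
              \<longlongrightarrow> 0) (finite_subsets_at_top UNIV))
       \<and> (\<forall>\<phi>\<in>L2.
            (\<lambda>x. 2 * commBBdag \<phi> x) \<in> L2
          \<and> (AE x in mu. ruelle (\<lambda>y. 2 * commBBdag \<phi> y) x = 0)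
          \<and> (\<forall>g\<in>L2. (AE x in mu. ruelle g x = 0) \<longrightarrow>
                inner_L2 (\<lambda>x. \<phi> x - 2 * commBBdag \<phi> x) g = 0))"
proof (intro conjI ballI impI)
  fix \<phi>
  assume "\<phi> \<in> L2"
  show "((\<lambda>F. dist_L2_sq (commBBdag \<phi>) (\<lambda>x. (1/2) * (\<Sum>w\<in>F. inner_L2 \<phi> (ket0 w) * ket0 w x)))
      \<longlongrightarrow> 0) (finite_subsets_at_top UNIV)"
    unfolding dist_commBBdag_ket0_sum[OF \<open>\<phi> \<in> L2\<close>]
    using tendsto_divide[OF haar_partial_tendsto[OF prepend_diff_L2[OF \<open>\<phi> \<in> L2\<close>]] tendsto_const, of 4]
    by simp
next
  fix \<phi> g
  assume \<phi>: "\<phi> \<in> L2"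
  then show "(\<lambda>x. 2 * commBBdag \<phi> x) \<in> L2"
    by (intro L2_cmult commBBdag_L2)
  show "AE x in mu. ruelle (\<lambda>y. 2 * commBBdag \<phi> y) x = 0"
    by (simp add: ruelle_two_commBBdag)
  assume "g \<in> L2" "AE x in mu. ruelle g x = 0"
  then show "inner_L2 (\<lambda>x. \<phi> x - 2 * commBBdag \<phi> x) g = 0"
    using \<phi> by (simp add: two_commBBdag inner_koopman_ruelle[OF ruelle_L2] inner_L2_AE_zero_right)
qed

end
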